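(* Let $d\ge1$ and let $G$ and $H$ be ordered graphs, each with $m$ edges, such that $M^{\mathbb E}_{d,G}=M^{\mathbb E}_{d,H}$. Then the edge bijection sending the $k$-th edge of $G$ to the $k$-th edge of $H$ is a cycle isomorphism.
   Context: An ordered graph is a finite vertex set with a sequence $(E_1,\dots,E_m)$ of distinct unordered pairs of distinct vertices. For a real configuration $\mathbf p$ in $\mathbb R^d$, $m^{\mathbb E}_G(\mathbf p)\in\mathbb R^m$ has $k$-th coordinate $\|\mathbf p_i-\mathbf p_j\|^2$ with $E_k=\{i,j\}$; $M^{\mathbb E}_{d,G}$ is the image of $m^{\mathbb E}_G$ over all real configurations in $\mathbb R^d$. A set of edges is cycle supported if its edges, in some order, form a simple cycle. An edge bijection between two graphs is a cycle isomorphism if a set of edges is cycle supported exactly when its image is cycle supported. *)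

theory Defs
  imports "HOL-Analysis.Analysis"
begin

definition ordered_graph :: "'a set \<Rightarrow> ('a \<times> 'a) list \<Rightarrow> bool" where
  "ordered_graph V E \<longleftrightarrow> finite V \<and>
     (\<forall>e\<in>set E. fst e \<in> V \<and> snd e \<in> V \<and> fst e \<noteq> snd e) \<and>
     distinct (map (\<lambda>e. {fst e, snd e}) E)"

definition meas :: "('a \<times> 'a) list \<Rightarrow> ('a \<Rightarrow> real ^ 'n) \<Rightarrow> real list" where
  "meas E p = map (\<lambda>e. (norm (p (fst e) - p (snd e)))\<^sup>2) E"

text \<open>M^E_{d,G}: image of the measurement map over all configurations in R^d,
where d = CARD('n).\<close>
definition meas_set :: "('a \<times> 'a) list \<Rightarrow> 'n::finite itself \<Rightarrow> real list set" where
  "meas_set E _ = range (meas E :: ('a \<Rightarrow> real ^ 'n) \<Rightarrow> real list)"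

definition is_simple_cycle_edges :: "'a set \<Rightarrow> 'a set set \<Rightarrow> bool" where
  "is_simple_cycle_edges V S \<longleftrightarrow> (\<exists>vs. length vs \<ge> 3 \<and> distinct vs \<and> set vs \<subseteq> V \<and>
      S = {{vs ! i, vs ! ((i + 1) mod length vs)} | i. i < length vs})"

definition cycle_supported :: "'a set \<Rightarrow> ('a \<times> 'a) list \<Rightarrow> nat set \<Rightarrow> bool" where
  "cycle_supported V E K \<longleftrightarrow> K \<subseteq> {..<length E} \<and>
     is_simple_cycle_edges V ((\<lambda>k. {fst (E ! k), snd (E ! k)}) ` K)"

end

theory Submission
  imports Defs "HOL-Library.Transitive_Closure_Table"
begin

text \<open>
  Call a set K of edge indices dependent with respect to a set M of measurement vectors
  if some coordinate k in K vanishes on every vector of M whose coordinates in K - {k}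
  vanish; the minimal dependent sets are determined by M alone.  For M = M^E_{d,G},
  coordinate k is forced to vanish exactly when the endpoints of edge k are joined by
  a path of edges in K - {k}: a path forces equal positions, and conversely placing the
  connected component of one endpoint at 0 and all other vertices at (1,...,1) is a
  configuration separating the endpoints.  Hence the dependent sets are those containing
  a cycle, the minimal ones are exactly the cycle supported sets, and equal measurement
  sets give equal families of cycle supported sets.
\<close>

definition adj :: "'a set set \<Rightarrow> 'a \<Rightarrow> 'a \<Rightarrow> bool" where
  "adj S u w \<longleftrightarrow> {u, w} \<in> S"

abbreviation linked :: "'a set set \<Rightarrow> 'a \<Rightarrow> 'a \<Rightarrow> bool" where
  "linked S \<equiv> (adj S)\<^sup>*\<^sup>*"

lemma adj_sym: "adj S u w \<Longrightarrow> adj S w u"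
  by (simp add: adj_def insert_commute)

lemma linked_sym: "linked S u w \<Longrightarrow> linked S w u"
  by (metis adj_sym sympI symp_rtranclp sympD)

lemma linked_mono: "S \<subseteq> T \<Longrightarrow> linked S u w \<Longrightarrow> linked T u w"
  by (rule rtranclp_mono[THEN predicate2D]) (auto simp: adj_def)

lemma linked_invariant:
  assumes "\<And>u w. adj S u w \<Longrightarrow> f u = f w" and "linked S u w"
  shows "f u = f w"
  using assms(2) by induction (auto dest: assms(1))

definition has_cycle :: "'a set set \<Rightarrow> bool" where
  "has_cycle S \<longleftrightarrow> (\<exists>a b. a \<noteq> b \<and> {a, b} \<in> S \<and> linked (S - {{a, b}}) a b)"

definition cycle_edge :: "'a list \<Rightarrow> nat \<Rightarrow> 'a set" where
  "cycle_edge vs i = {vs ! i, vs ! (Suc i mod length vs)}"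

lemma is_simple_cycle_edges_iff:
  "is_simple_cycle_edges V S \<longleftrightarrow>
     (\<exists>vs. 3 \<le> length vs \<and> distinct vs \<and> set vs \<subseteq> V \<and> S = cycle_edge vs ` {..<length vs})"
  unfolding is_simple_cycle_edges_def cycle_edge_def by (simp add: setcompr_eq_image lessThan_def)

lemma cycle_edge_inj:
  assumes "distinct vs" and "3 \<le> length vs"
  shows "inj_on (cycle_edge vs) {..<length vs}"
proof (rule inj_onI)
  fix i j assume i: "i \<in> {..<length vs}" and j: "j \<in> {..<length vs}"
    and eq: "cycle_edge vs i = cycle_edge vs j"
  have idx: "vs ! k = vs ! l \<longleftrightarrow> k = l" if "k < length vs" "l < length vs" for k l
    using assms(1) that by (simp add: nth_eq_iff_index_eq)
  have "Suc k mod length vs < length vs" for k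
    using assms(2) by (intro mod_less_divisor) linarith
  then have "i = j \<or> (i = Suc j mod length vs \<and> j = Suc i mod length vs)"
    using eq i j idx by (auto simp: cycle_edge_def doubleton_eq_iff)
  then show "i = j"
    using i j assms(2) by (auto simp: mod_Suc split: if_splits)
qed

lemma cycle_has_cycle:
  assumes "distinct vs" and "3 \<le> length vs"
  shows "has_cycle (cycle_edge vs ` {..<length vs})"
proof -
  define n where "n = length vs"
  define C where "C = cycle_edge vs ` {..<n}"
  define a b where "a = vs ! (n - 1)" and "b = vs ! 0"
  have "Suc (n - 1) = n"
    using assms(2) by (simp add: n_def)
  then have closing: "cycle_edge vs (n - 1) = {a, b}"
    by (simp add: cycle_edge_def a_def b_def n_def)
  have path: "linked (C - {{a, b}}) b (vs ! j)" if "j < n" for j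
    using that
  proof (induction j)
    case 0
    show ?case by (simp add: b_def)
  next
    case (Suc j)
    have "cycle_edge vs j \<in> C - {cycle_edge vs (n - 1)}"
      using cycle_edge_inj[OF assms] Suc.prems by (auto simp: C_def n_def inj_on_eq_iff)
    then have "adj (C - {{a, b}}) (vs ! j) (vs ! Suc j)"
      using Suc.prems closing by (simp add: adj_def cycle_edge_def n_def)
    with Suc show ?case
      by (meson Suc_lessD rtranclp.rtrancl_into_rtrancl)
  qed
  have "vs \<noteq> []"
    using assms(2) by auto
  then have "a \<noteq> b"
    using nth_eq_iff_index_eq[OF assms(1), of "n - 1" 0] assms(2) by (simp add: a_def b_def n_def)
  moreover have "n - 1 < n"
    using assms(2) by (simp add: n_def)
  then have "{a, b} \<in> C"
    using closing unfolding C_def by (metis image_eqI lessThan_iff)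
  moreover have "linked (C - {{a, b}}) a b"
    using path[of "n - 1"] assms(2) by (auto simp: a_def n_def intro: linked_sym)
  ultimately show ?thesis
    unfolding has_cycle_def C_def n_def by blast
qed

lemma cycle_minus_two_edges_unlinked:
  assumes "distinct vs" and "3 \<le> length vs"
    and "i < length vs" and "j < length vs" and "i \<noteq> j"
  shows "\<not> linked (cycle_edge vs ` {..<length vs} - {cycle_edge vs i, cycle_edge vs j})
                   (vs ! i) (vs ! (Suc i mod length vs))"
proof
  define n where "n = length vs"
  \<comment> \<open>one of the two arcs into which removing edges i and j splits the cycle\<close>
  define arc where "arc v \<longleftrightarrow> (\<exists>t<n. v = vs ! t \<and> (i < t) \<noteq> (j < t))" for v
  have arc_nth: "arc (vs ! t) \<longleftrightarrow> (i < t) \<noteq> (j < t)" if "t < n" for t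
    using that assms(1) by (auto simp: arc_def n_def nth_eq_iff_index_eq)
  have arc_flip: "arc (vs ! (Suc t mod n)) \<longleftrightarrow> arc (vs ! t) \<noteq> (t = i \<or> t = j)" if "t < n" for t
  proof (cases "Suc t = n")
    case True
    then show ?thesis
      using that assms(3-5) arc_nth[of t] arc_nth[of 0] unfolding n_def[symmetric] by auto
  next
    case False
    then show ?thesis
      using that assms(5) arc_nth[of t] arc_nth[of "Suc t"] by auto
  qed
  assume "linked (cycle_edge vs ` {..<length vs} - {cycle_edge vs i, cycle_edge vs j})
                   (vs ! i) (vs ! (Suc i mod length vs))"
  then have "arc (vs ! i) = arc (vs ! (Suc i mod length vs))"
  proof (rule linked_invariant[rotated])
    fix u w
    assume "adj (cycle_edge vs ` {..<length vs} - {cycle_edge vs i, cycle_edge vs j}) u w"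
    then obtain t where t: "t < n" "t \<noteq> i" "t \<noteq> j" "{u, w} = cycle_edge vs t"
      by (auto simp: adj_def n_def)
    then show "arc u = arc w"
      using arc_flip[OF t(1)] by (auto simp: cycle_edge_def doubleton_eq_iff n_def)
  qed
  then show False
    using arc_flip[of i] assms(3) by (simp add: n_def)
qed

lemma cycle_minimal:
  assumes "distinct vs" and "3 \<le> length vs" and "S \<subset> cycle_edge vs ` {..<length vs}"
  shows "\<not> has_cycle S"
proof
  assume "has_cycle S"
  then obtain a b where ab: "a \<noteq> b" "{a, b} \<in> S" "linked (S - {{a, b}}) a b"
    unfolding has_cycle_def by blast
  obtain i where i: "i < length vs" "{a, b} = cycle_edge vs i"
    using ab(2) assms(3) by auto
  obtain j where j: "j < length vs" "cycle_edge vs j \<notin> S"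
    using assms(3) by auto
  have "i \<noteq> j"
    using i j ab(2) by auto
  have "S - {{a, b}} \<subseteq> cycle_edge vs ` {..<length vs} - {cycle_edge vs i, cycle_edge vs j}"
    using assms(3) i(2) j(2) by auto
  then have "linked (cycle_edge vs ` {..<length vs} - {cycle_edge vs i, cycle_edge vs j}) a b"
    using ab(3) by (rule linked_mono)
  moreover have "a = vs ! i \<and> b = vs ! (Suc i mod length vs) \<or>
                 a = vs ! (Suc i mod length vs) \<and> b = vs ! i"
    using i(2) by (auto simp: cycle_edge_def doubleton_eq_iff)
  ultimately have "linked (cycle_edge vs ` {..<length vs} - {cycle_edge vs i, cycle_edge vs j})
                     (vs ! i) (vs ! (Suc i mod length vs))"
    by (metis linked_sym)
  then show False
    using cycle_minus_two_edges_unlinked[OF assms(1,2) i(1) j(1) \<open>i \<noteq> j\<close>] by blast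
qed

lemma minimal_cyclic_is_simple_cycle:
  assumes "\<Union>S \<subseteq> V" and "has_cycle S" and "\<forall>S'\<subset>S. \<not> has_cycle S'"
  shows "is_simple_cycle_edges V S"
proof -
  obtain a b where ab: "a \<noteq> b" "{a, b} \<in> S" "linked (S - {{a, b}}) a b"
    using assms(2) unfolding has_cycle_def by blast
  then obtain xs where path: "rtrancl_path (adj (S - {{a, b}})) a xs b" and "distinct (a # xs)"
    by (metis rtranclp_eq_rtrancl_path rtrancl_path_distinct)
  define vs where "vs = a # xs"
  have "xs \<noteq> []"
    using path ab(1) by (auto elim: rtrancl_path.cases)
  then have last: "vs ! length xs = b"
    using rtrancl_path_last[OF path] by (simp add: vs_def last_conv_nth nth_Cons')
  have "length xs \<noteq> 1"
  proof
    assume "length xs = 1"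
    then have "adj (S - {{a, b}}) a b"
      using rtrancl_path_nth[OF path, of 0] last by (simp add: vs_def)
    then show False
      by (simp add: adj_def)
  qed
  moreover have "0 < length xs"
    using \<open>xs \<noteq> []\<close> by simp
  ultimately have len: "3 \<le> length vs"
    unfolding vs_def length_Cons by linarith
  have "cycle_edge vs i \<in> S" if "i < length vs" for i
  proof (cases "i < length xs")
    case True
    then show ?thesis
      using rtrancl_path_nth[OF path True] by (simp add: adj_def cycle_edge_def vs_def)
  next
    case False
    then have "i = length xs"
      using that by (simp add: vs_def)
    then have "cycle_edge vs i = {b, a}"
      using last by (simp add: cycle_edge_def vs_def)
    then show ?thesis
      using ab(2) by (simp add: insert_commute)
  qed
  then have "cycle_edge vs ` {..<length vs} \<subseteq> S"
    by blast
  moreover have "has_cycle (cycle_edge vs ` {..<length vs})"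
    using cycle_has_cycle[OF _ len] \<open>distinct (a # xs)\<close> by (simp add: vs_def)
  ultimately have S: "S = cycle_edge vs ` {..<length vs}"
    using assms(3) by (metis psubsetI)
  have "set vs \<subseteq> \<Union>(cycle_edge vs ` {..<length vs})"
    by (auto simp: in_set_conv_nth cycle_edge_def)
  then have "set vs \<subseteq> V"
    using assms(1) S by blast
  then show ?thesis
    unfolding is_simple_cycle_edges_iff
    using len \<open>distinct (a # xs)\<close> S by (intro exI[of _ vs]) (simp add: vs_def)
qed

lemma is_simple_cycle_edges_iff_minimal_cyclic:
  assumes "\<Union>S \<subseteq> V"
  shows "is_simple_cycle_edges V S \<longleftrightarrow> has_cycle S \<and> (\<forall>S'\<subset>S. \<not> has_cycle S')"
proof
  assume "is_simple_cycle_edges V S"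
  then obtain vs where "distinct vs" "3 \<le> length vs" "S = cycle_edge vs ` {..<length vs}"
    unfolding is_simple_cycle_edges_iff by blast
  then show "has_cycle S \<and> (\<forall>S'\<subset>S. \<not> has_cycle S')"
    using cycle_has_cycle cycle_minimal by blast
qed (use minimal_cyclic_is_simple_cycle[OF assms] in blast)

lemma inj_on_minimal_iff:
  assumes "inj_on f A" and "K \<subseteq> A" and "\<And>K'. K' \<subseteq> K \<Longrightarrow> P K' \<longleftrightarrow> Q (f ` K')"
  shows "(\<forall>K'\<subset>K. \<not> P K') \<longleftrightarrow> (\<forall>S\<subset>f ` K. \<not> Q S)"
proof
  assume min: "\<forall>K'\<subset>K. \<not> P K'"
  show "\<forall>S\<subset>f ` K. \<not> Q S"
  proof (intro allI impI)
    fix S assume S: "S \<subset> f ` K"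
    then obtain K' where K': "K' \<subseteq> K" "S = f ` K'"
      using subset_image_iff[of S f K] by blast
    with S have "K' \<subset> K"
      by blast
    then show "\<not> Q S"
      using min assms(3)[OF K'(1)] K'(2) by simp
  qed
next
  assume min: "\<forall>S\<subset>f ` K. \<not> Q S"
  show "\<forall>K'\<subset>K. \<not> P K'"
  proof (intro allI impI)
    fix K' assume K': "K' \<subset> K"
    have "f ` K' \<subset> f ` K"
      using image_strict_mono[OF inj_on_subset[OF assms(1,2)] K'] .
    then show "\<not> P K'"
      using min assms(3) K' by blast
  qed
qed

definition forces_zero :: "real list set \<Rightarrow> nat set \<Rightarrow> nat \<Rightarrow> bool" where
  "forces_zero M K k \<longleftrightarrow> (\<forall>x\<in>M. (\<forall>j\<in>K. x ! j = 0) \<longrightarrow> x ! k = 0)"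

definition zero_dependent :: "real list set \<Rightarrow> nat set \<Rightarrow> bool" where
  "zero_dependent M K \<longleftrightarrow> (\<exists>k\<in>K. forces_zero M (K - {k}) k)"

definition zero_circuit :: "real list set \<Rightarrow> nat set \<Rightarrow> bool" where
  "zero_circuit M K \<longleftrightarrow> zero_dependent M K \<and> (\<forall>K'\<subset>K. \<not> zero_dependent M K')"

definition edge_set :: "('a \<times> 'a) list \<Rightarrow> nat \<Rightarrow> 'a set" where
  "edge_set E k = {fst (E ! k), snd (E ! k)}"

lemma edge_set_inj:
  assumes "ordered_graph V E"
  shows "inj_on (edge_set E) {..<length E}"
  using assms unfolding ordered_graph_def edge_set_def inj_on_def
  by (auto simp: distinct_conv_nth)

lemma meas_nth_eq_0_iff:
  "j < length E \<Longrightarrow> meas E p ! j = 0 \<longleftrightarrow> p (fst (E ! j)) = p (snd (E ! j))"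
  by (simp add: meas_def)

lemma linked_imp_forces_zero:
  assumes "k < length E" and "K \<subseteq> {..<length E}"
    and "linked (edge_set E ` K) (fst (E ! k)) (snd (E ! k))"
  shows "forces_zero (meas_set E TYPE('n::finite)) K k"
  unfolding forces_zero_def meas_set_def
proof (intro ballI impI)
  fix x assume "x \<in> range (meas E :: ('a \<Rightarrow> real ^ 'n) \<Rightarrow> real list)"
  then obtain p :: "'a \<Rightarrow> real ^ 'n" where x: "x = meas E p"
    by auto
  assume zero: "\<forall>j\<in>K. x ! j = 0"
  have "p u = p w" if uw: "adj (edge_set E ` K) u w" for u w
  proof -
    obtain j where j: "j \<in> K" "{u, w} = {fst (E ! j), snd (E ! j)}"
      using uw unfolding adj_def edge_set_def by blast
    have "meas E p ! j = 0"
      using zero j(1) x by blast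
    moreover have "j < length E"
      using j(1) assms(2) by auto
    ultimately have "p (fst (E ! j)) = p (snd (E ! j))"
      by (simp add: meas_nth_eq_0_iff)
    then show ?thesis
      using j(2) by (auto simp: doubleton_eq_iff)
  qed
  then have "p (fst (E ! k)) = p (snd (E ! k))"
    using assms(3) by (rule linked_invariant)
  then show "x ! k = 0"
    using assms(1) x by (simp add: meas_nth_eq_0_iff)
qed

lemma forces_zero_imp_linked:
  assumes "k < length E" and "K \<subseteq> {..<length E}"
    and "forces_zero (meas_set E TYPE('n::finite)) K k"
  shows "linked (edge_set E ` K) (fst (E ! k)) (snd (E ! k))"
proof (rule ccontr)
  let ?C = "linked (edge_set E ` K) (fst (E ! k))"
  assume not_linked: "\<not> ?C (snd (E ! k))"
  define p :: "'a \<Rightarrow> real ^ 'n" where "p v = (if ?C v then 0 else One)" for v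
  have "p (fst (E ! j)) = p (snd (E ! j))" if "j \<in> K" for j
  proof -
    have "adj (edge_set E ` K) (fst (E ! j)) (snd (E ! j))"
      using that unfolding adj_def edge_set_def by blast
    then have "?C (fst (E ! j)) \<longleftrightarrow> ?C (snd (E ! j))"
      by (meson adj_sym rtranclp.rtrancl_into_rtrancl)
    then show ?thesis
      by (simp add: p_def)
  qed
  then have "\<forall>j\<in>K. meas E p ! j = 0"
    using assms(2) by (auto simp: meas_nth_eq_0_iff)
  moreover have "meas E p \<in> meas_set E TYPE('n)"
    by (simp add: meas_set_def)
  ultimately have "meas E p ! k = 0"
    using assms(3) unfolding forces_zero_def by blast
  moreover have "p (fst (E ! k)) \<noteq> p (snd (E ! k))"
    using not_linked by (simp add: p_def)
  ultimately show False
    using assms(1) by (simp add: meas_nth_eq_0_iff)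
qed

lemma forces_zero_meas_set_iff:
  assumes "k < length E" and "K \<subseteq> {..<length E}"
  shows "forces_zero (meas_set E TYPE('n::finite)) K k \<longleftrightarrow>
         linked (edge_set E ` K) (fst (E ! k)) (snd (E ! k))"
  using forces_zero_imp_linked[OF assms] linked_imp_forces_zero[OF assms] by blast

lemma zero_dependent_meas_set_iff:
  assumes "ordered_graph V E" and "K \<subseteq> {..<length E}"
  shows "zero_dependent (meas_set E TYPE('n::finite)) K \<longleftrightarrow> has_cycle (edge_set E ` K)"
proof -
  have "forces_zero (meas_set E TYPE('n)) (K - {k}) k \<longleftrightarrow>
        linked (edge_set E ` K - {edge_set E k}) (fst (E ! k)) (snd (E ! k))" if "k \<in> K" for k
  proof -
    have "edge_set E ` (K - {k}) = edge_set E ` K - {edge_set E k}"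
      using inj_on_image_set_diff[OF edge_set_inj[OF assms(1)], of K "{k}"] assms(2) that by auto
    moreover have "k < length E" and "K - {k} \<subseteq> {..<length E}"
      using that assms(2) by auto
    ultimately show ?thesis
      by (simp add: forces_zero_meas_set_iff)
  qed
  then have "zero_dependent (meas_set E TYPE('n)) K \<longleftrightarrow>
        (\<exists>k\<in>K. linked (edge_set E ` K - {edge_set E k}) (fst (E ! k)) (snd (E ! k)))"
    unfolding zero_dependent_def by blast
  also have "\<dots> \<longleftrightarrow> has_cycle (edge_set E ` K)"
  proof
    assume "\<exists>k\<in>K. linked (edge_set E ` K - {edge_set E k}) (fst (E ! k)) (snd (E ! k))"
    then obtain k where "k \<in> K" "linked (edge_set E ` K - {edge_set E k}) (fst (E ! k)) (snd (E ! k))"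
      by blast
    moreover have "fst (E ! k) \<noteq> snd (E ! k)"
      using assms \<open>k \<in> K\<close> unfolding ordered_graph_def by auto
    ultimately show "has_cycle (edge_set E ` K)"
      unfolding has_cycle_def edge_set_def by blast
  next
    assume "has_cycle (edge_set E ` K)"
    then obtain a b k where k: "k \<in> K" "{a, b} = edge_set E k"
      and "linked (edge_set E ` K - {{a, b}}) a b"
      unfolding has_cycle_def by auto
    then have "linked (edge_set E ` K - {edge_set E k}) a b"
      by simp
    moreover have "a = fst (E ! k) \<and> b = snd (E ! k) \<or> a = snd (E ! k) \<and> b = fst (E ! k)"
      using k(2) by (auto simp: edge_set_def doubleton_eq_iff)
    ultimately have "linked (edge_set E ` K - {edge_set E k}) (fst (E ! k)) (snd (E ! k))"
      by (metis linked_sym)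
    with k(1) show "\<exists>k\<in>K. linked (edge_set E ` K - {edge_set E k}) (fst (E ! k)) (snd (E ! k))"
      by blast
  qed
  finally show ?thesis .
qed

lemma zero_circuit_meas_set_iff_cycle_supported:
  assumes "ordered_graph V E" and "K \<subseteq> {..<length E}"
  shows "zero_circuit (meas_set E TYPE('n::finite)) K \<longleftrightarrow> cycle_supported V E K"
proof -
  have "(\<forall>K'\<subset>K. \<not> zero_dependent (meas_set E TYPE('n)) K') \<longleftrightarrow>
        (\<forall>S\<subset>edge_set E ` K. \<not> has_cycle S)"
  proof (rule inj_on_minimal_iff[OF edge_set_inj[OF assms(1)] assms(2)])
    fix K' assume "K' \<subseteq> K"
    then show "zero_dependent (meas_set E TYPE('n)) K' \<longleftrightarrow> has_cycle (edge_set E ` K')"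
      using assms(2) by (intro zero_dependent_meas_set_iff[OF assms(1)]) auto
  qed
  then have "zero_circuit (meas_set E TYPE('n)) K \<longleftrightarrow>
             has_cycle (edge_set E ` K) \<and> (\<forall>S\<subset>edge_set E ` K. \<not> has_cycle S)"
    unfolding zero_circuit_def by (simp add: zero_dependent_meas_set_iff[OF assms])
  also have "\<dots> \<longleftrightarrow> is_simple_cycle_edges V (edge_set E ` K)"
    using assms unfolding ordered_graph_def edge_set_def
    by (intro is_simple_cycle_edges_iff_minimal_cyclic[symmetric]) auto
  also have "\<dots> \<longleftrightarrow> cycle_supported V E K"
    using assms(2) by (simp add: cycle_supported_def edge_set_def)
  finally show ?thesis .
qed

theorem mainTheorem16:
  fixes VG :: "'a set" and EG :: "('a \<times> 'a) list"
    and VH :: "'b set" and EH :: "('b \<times> 'b) list"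
    and m :: nat
  assumes "ordered_graph VG EG" and "ordered_graph VH EH"
    and "length EG = m" and "length EH = m"
    and "meas_set EG TYPE('n::finite) = meas_set EH TYPE('n)"
  shows "\<forall>K \<subseteq> {..<m}. cycle_supported VG EG K \<longleftrightarrow> cycle_supported VH EH K"
proof (intro allI impI)
  fix K assume "K \<subseteq> {..<m}"
  then have "cycle_supported VG EG K \<longleftrightarrow> zero_circuit (meas_set EG TYPE('n)) K"
    using zero_circuit_meas_set_iff_cycle_supported[OF assms(1), where 'n='n] assms(3) by simp
  also have "\<dots> \<longleftrightarrow> cycle_supported VH EH K"
    using \<open>K \<subseteq> {..<m}\<close> zero_circuit_meas_set_iff_cycle_supported[OF assms(2), where 'n='n] assms(4,5) by simp
  finally show "cycle_supported VG EG K \<longleftrightarrow> cycle_supported VH EH K" .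
qed

end
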